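(* Let $r_0>0$, let $q\colon\mathbb{R}\to[0,+\infty)$ be continuous with $\limsup_{|y|\to+\infty}q(y)/|y|<1$, and let $D_q:=\{z\in\mathbb{C}:-q(\mathrm{Im}\,z)<\mathrm{Re}\,z<q(\mathrm{Im}\,z)\}$. Let $\mu_0$ be a positive Borel measure on $\mathbb{C}$ with support contained in the closure of $D_q$, and set $\mu_0^i(y):=\mu_0(\{z:|\mathrm{Im}\,z|\le y\})$ for $y\ge0$; assume there is a constant $C$ with $\mu_0^i(y)\le Cy$ for all $y\ge0$. Put $Q(y):=q(y)+q(-y)$, $y\ge0$. Then there is $C_0\ge0$ such that for all $r_0\le r<R<+\infty$ $$l^{\mathrm{rh}}_{\mu_0}(r,R)\le\int_r^R\frac{Q(y)}{y^2}\,d\mu_0^i(y)+C_0.$$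
   Context: $l^{\mathrm{rh}}_{\mu_0}(r,R):=\int_{r<|z|\le R,\ \mathrm{Re}\,z>0}\mathrm{Re}\frac1z\,d\mu_0(z)$. The Stieltjes integral $\int_r^R\dots d\mu_0^i$ is taken over the interval $(r,R]$. *)

theory Defs
  imports "HOL-Analysis.Analysis"
begin

definition Dq :: "(real \<Rightarrow> real) \<Rightarrow> complex set" where
  "Dq q = {z. - q (Im z) < Re z \<and> Re z < q (Im z)}"

definition mu_i :: "complex measure \<Rightarrow> real \<Rightarrow> real" where
  "mu_i M y = measure M {z. \<bar>Im z\<bar> \<le> y}"

definition l_rh :: "complex measure \<Rightarrow> real \<Rightarrow> real \<Rightarrow> real" where
  "l_rh M r R = (LINT z : {z. r < cmod z \<and> cmod z \<le> R \<and> Re z > 0} | M. Re (1 / z))"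

definition stieltjes_Ioc :: "complex measure \<Rightarrow> (real \<Rightarrow> real) \<Rightarrow> real \<Rightarrow> real \<Rightarrow> real" where
  "stieltjes_Ioc M f r R = (LINT y : {r<..R} | interval_measure (mu_i M). f y)"

end

theory Submission
  imports Defs
begin

(* On the region r < |z| <= R, Re z > 0 we have Re (1/z) = Re z / |z|^2. Where |Im z| <= r this
   is at most 1/|z| < 1/r, and M has mass at most C r there, contributing at most C. Where
   |Im z| > r, the support condition Re z <= q (Im z) gives
   Re (1/z) <= q (Im z) / (Im z)^2 <= Q (|Im z|) / |Im z|^2, and integrating a function of |Im z|
   against M is integrating against the image of M under |Im|, which is the Lebesgue-Stieltjes
   measure of mu_0^i. Hence C0 = max C 0 works for every r0 > 0. *)

lemma mono_measure_sublevel: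
  fixes g :: "'a \<Rightarrow> real"
  assumes [measurable]: "g \<in> borel_measurable M"
    and finite: "\<And>y. emeasure M {x\<in>space M. g x \<le> y} < \<infinity>"
  shows "mono (\<lambda>y. measure M {x\<in>space M. g x \<le> y})"
  using finite by (intro monoI measure_mono_fmeasurable) (auto simp: fmeasurable_def)

lemma continuous_at_right_measure_sublevel:
  fixes g :: "'a \<Rightarrow> real"
  assumes [measurable]: "g \<in> borel_measurable M"
    and finite: "\<And>y. emeasure M {x\<in>space M. g x \<le> y} < \<infinity>"
  shows "continuous (at_right a) (\<lambda>y. measure M {x\<in>space M. g x \<le> y})"
  unfolding continuous_within
proof (rule tendsto_at_right_sequentially[where b="a + 1"])
  fix s :: "nat \<Rightarrow> real" assume s: "decseq s" "s \<longlonglongrightarrow> a"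
  then have "(\<lambda>n. measure M {x\<in>space M. g x \<le> s n})
      \<longlonglongrightarrow> measure M (\<Inter>n. {x\<in>space M. g x \<le> s n})"
    using less_imp_neq[OF finite] by (intro Lim_measure_decseq) (auto simp: decseq_def intro: order_trans)
  also have "(\<Inter>n. {x\<in>space M. g x \<le> s n}) = {x\<in>space M. g x \<le> a}"
    using decseq_ge[OF s] by (auto intro: order_trans LIMSEQ_le_const[OF s(2)])
  finally show "(\<lambda>n. measure M {x\<in>space M. g x \<le> s n}) \<longlonglongrightarrow> measure M {x\<in>space M. g x \<le> a}" .
qed simp

lemma distr_eq_interval_measure_sublevel:
  fixes g :: "'a \<Rightarrow> real"
  assumes [measurable]: "g \<in> borel_measurable M"
    and finite: "\<And>y. emeasure M {x\<in>space M. g x \<le> y} < \<infinity>"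
  shows "distr M borel g = interval_measure (\<lambda>y. measure M {x\<in>space M. g x \<le> y})"
    (is "_ = interval_measure ?F")
proof (rule measure_eqI_generator_eq[where \<Omega>=UNIV and E="range (\<lambda>(a, b). {a<..b})"
      and A="\<lambda>n. {- real n<..real n}"])
  have fmeasurable_sublevel: "{x\<in>space M. g x \<le> y} \<in> fmeasurable M" for y
    using finite by (simp add: fmeasurable_def)
  fix X assume "X \<in> range (\<lambda>(a, b). {a<..b::real})"
  then obtain a b where X: "X = {a<..b}" by auto
  show "emeasure (distr M borel g) X = emeasure (interval_measure ?F) X"
  proof (cases "a \<le> b")
    case True
    have sub: "{x\<in>space M. g x \<le> a} \<subseteq> {x\<in>space M. g x \<le> b}"
      using True by auto
    moreover have "g -` X \<inter> space M = {x\<in>space M. g x \<le> b} - {x\<in>space M. g x \<le> a}"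
      unfolding X by auto
    ultimately have "emeasure (distr M borel g) X
        = emeasure M ({x\<in>space M. g x \<le> b} - {x\<in>space M. g x \<le> a})"
      by (simp add: emeasure_distr X)
    also have "\<dots> = ?F b - ?F a"
      using fmeasurable_sublevel sub by (simp add: emeasure_eq_measure2 measure_Diff fmeasurable.Diff)
    also have "\<dots> = emeasure (interval_measure ?F) X"
      unfolding X using True mono_measure_sublevel[OF assms] continuous_at_right_measure_sublevel[OF assms]
      by (subst emeasure_interval_measure_Ioc) (auto simp: mono_def)
    finally show ?thesis .
  qed (simp add: X)
next
  have "x \<in> (\<Union>n. {- real n<..real n})" for x :: real
  proof -
    obtain n where "\<bar>x\<bar> < real n"
      using reals_Archimedean2 by blast
    then show ?thesis
      by (auto simp: abs_less_iff intro!: exI[of _ n])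
  qed
  then show "(\<Union>n. {- real n<..real n}) = UNIV"
    by blast
next
  fix n :: nat
  have "emeasure (distr M borel g) {- real n<..real n} \<le> emeasure M {x\<in>space M. g x \<le> real n}"
    by (auto simp: emeasure_distr intro!: emeasure_mono)
  also have "\<dots> < \<infinity>"
    by (rule finite)
  finally show "emeasure (distr M borel g) {- real n<..real n} \<noteq> \<infinity>"
    by simp
qed (auto simp: borel_sigma_sets_Ioc Int_stable_def)

lemma mu_i_eq_measure_sublevel:
  assumes "sets M = sets borel"
  shows "mu_i M = (\<lambda>y. measure M {z\<in>space M. \<bar>Im z\<bar> \<le> y})"
  using sets_eq_imp_space_eq[OF assms] by (simp add: mu_i_def fun_eq_iff)

lemma stieltjes_Ioc_eq_integral_Im:
  fixes M :: "complex measure" and f :: "real \<Rightarrow> real"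
  assumes M_borel: "sets M = sets borel"
    and finite: "\<And>y. emeasure M {z. \<bar>Im z\<bar> \<le> y} < \<infinity>"
    and [measurable]: "f \<in> borel_measurable borel"
  shows "stieltjes_Ioc M f r R = (\<integral>z. indicator {r<..R} \<bar>Im z\<bar> * f \<bar>Im z\<bar> \<partial>M)"
proof -
  note [measurable_cong] = M_borel
  have space: "space M = UNIV"
    using sets_eq_imp_space_eq[OF M_borel] by simp
  have "interval_measure (mu_i M) = distr M borel (\<lambda>z. \<bar>Im z\<bar>)"
    using distr_eq_interval_measure_sublevel[of "\<lambda>z. \<bar>Im z\<bar>" M] finite
    by (simp add: mu_i_eq_measure_sublevel[OF M_borel] space)
  then show ?thesis
    unfolding stieltjes_Ioc_def set_lebesgue_integral_def by (simp add: integral_distr)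
qed

lemma Re_inverse_le_inverse_norm: "Re (1 / z) \<le> 1 / cmod z"
  using abs_Re_le_cmod[of "1 / z"] by (simp add: norm_divide)

lemma Re_inverse_le_divide_Im_square:
  assumes "Re z \<le> b" "0 \<le> b" "Im z \<noteq> 0"
  shows "Re (1 / z) \<le> b / (Im z)\<^sup>2"
proof -
  have "Re (1 / z) = Re z / (cmod z)\<^sup>2"
    by (simp add: Re_divide cmod_power2)
  also have "\<dots> \<le> b / (cmod z)\<^sup>2"
    using assms(1) by (rule divide_right_mono) simp
  also have "\<dots> \<le> b / (Im z)\<^sup>2"
    using assms by (intro divide_left_mono) (auto simp: cmod_power2 intro!: mult_pos_pos add_nonneg_pos)
  finally show ?thesis .
qed

lemma closure_Dq_subset:
  assumes "continuous_on UNIV q"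
  shows "closure (Dq q) \<subseteq> {z. Re z \<le> q (Im z)}"
proof (rule closure_minimal)
  show "Dq q \<subseteq> {z. Re z \<le> q (Im z)}"
    by (auto simp: Dq_def)
  show "closed {z. Re z \<le> q (Im z)}"
    by (intro closed_Collect_le continuous_intros continuous_on_compose2[OF assms]) auto
qed

lemma indicator_Re_inverse_le:
  fixes q :: "real \<Rightarrow> real"
  assumes q_nonneg: "\<And>y. q y \<ge> 0" and Re_le: "Re z \<le> q (Im z)" and r: "r > 0"
  shows "indicator {z. r < cmod z \<and> cmod z \<le> R \<and> Re z > 0} z * Re (1 / z)
    \<le> indicator {z. \<bar>Im z\<bar> \<le> r} z / r
      + indicator {r<..R} \<bar>Im z\<bar> * ((q \<bar>Im z\<bar> + q (- \<bar>Im z\<bar>)) / \<bar>Im z\<bar>\<^sup>2)"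
proof (cases "r < cmod z \<and> cmod z \<le> R \<and> Re z > 0")
  case False
  then have "indicator {z. r < cmod z \<and> cmod z \<le> R \<and> Re z > 0} z = (0::real)"
    by (simp add: indicator_def)
  moreover have "0 \<le> indicator {z. \<bar>Im z\<bar> \<le> r} z / r
      + indicator {r<..R} \<bar>Im z\<bar> * ((q \<bar>Im z\<bar> + q (- \<bar>Im z\<bar>)) / \<bar>Im z\<bar>\<^sup>2)"
    using r q_nonneg by (intro add_nonneg_nonneg mult_nonneg_nonneg divide_nonneg_nonneg) auto
  ultimately show ?thesis
    by simp
next
  case z: True
  show ?thesis
  proof (cases "\<bar>Im z\<bar> \<le> r")
    case True
    have "Re (1 / z) \<le> 1 / cmod z"
      by (rule Re_inverse_le_inverse_norm)
    also have "\<dots> \<le> 1 / r"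
      using z r by (intro divide_left_mono) (auto intro!: mult_pos_pos)
    finally show ?thesis
      using z True q_nonneg[of "\<bar>Im z\<bar>"] q_nonneg[of "- \<bar>Im z\<bar>"] by (simp add: indicator_def)
  next
    case False
    then have Im: "r < \<bar>Im z\<bar>" "\<bar>Im z\<bar> \<le> R"
      using z abs_Im_le_cmod[of z] by linarith+
    have "Re (1 / z) \<le> q (Im z) / (Im z)\<^sup>2"
      using Re_le q_nonneg Im r by (intro Re_inverse_le_divide_Im_square) auto
    also have "\<dots> \<le> (q \<bar>Im z\<bar> + q (- \<bar>Im z\<bar>)) / \<bar>Im z\<bar>\<^sup>2"
      unfolding power2_abs using q_nonneg[of "Im z"] q_nonneg[of "- Im z"]
      by (intro divide_right_mono) (auto simp: abs_if)
    finally show ?thesis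
      using z Im False by (simp add: indicator_def)
  qed
qed

lemma l_rh_le_mu_i_plus_stieltjes_Ioc:
  fixes M :: "complex measure" and q :: "real \<Rightarrow> real"
  assumes M_borel: "sets M = sets borel"
    and finite: "\<And>y. emeasure M {z. \<bar>Im z\<bar> \<le> y} < \<infinity>"
    and q_cont: "continuous_on UNIV q" and q_nonneg: "\<And>y. q y \<ge> 0"
    and Re_le: "AE z in M. Re z \<le> q (Im z)"
    and r: "r > 0"
  shows "l_rh M r R \<le> mu_i M r / r + stieltjes_Ioc M (\<lambda>y. (q y + q (- y)) / y\<^sup>2) r R"
proof -
  define h where "h y = (q y + q (- y)) / y\<^sup>2" for y
  define A where "A = {z. r < cmod z \<and> cmod z \<le> R \<and> Re z > 0}"
  define L where "L = {z. \<bar>Im z\<bar> \<le> r}"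
  define B where "B = {z. r < \<bar>Im z\<bar> \<and> \<bar>Im z\<bar> \<le> R}"
  note [measurable_cong] = M_borel
  have [measurable]: "q \<in> borel_measurable borel"
    using q_cont by (rule borel_measurable_continuous_onI)
  have [measurable]: "A \<in> sets borel" "L \<in> sets borel" "B \<in> sets borel"
    unfolding A_def L_def B_def by measurable
  have [measurable]: "h \<in> borel_measurable borel"
    unfolding h_def by measurable
  have slab: "{z. \<bar>Im z\<bar> \<le> y} \<in> sets M" for y
    by measurable
  have "emeasure M A \<le> emeasure M {z. \<bar>Im z\<bar> \<le> R}"
    using slab by (intro emeasure_mono) (auto simp: A_def intro: order_trans[OF abs_Im_le_cmod])
  then have A_finite: "emeasure M A < \<infinity>"
    using finite by (rule le_less_trans)
  have "emeasure M B \<le> emeasure M {z. \<bar>Im z\<bar> \<le> R}"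
    using slab by (intro emeasure_mono) (auto simp: B_def)
  then have B_finite: "emeasure M B < \<infinity>"
    using finite by (rule le_less_trans)
  obtain K where K: "\<And>y. y \<in> {r..R} \<Longrightarrow> norm (h y) \<le> K"
  proof (rule continuous_on_compact_bound)
    show "continuous_on {r..R} h"
      using r unfolding h_def
      by (intro continuous_intros continuous_on_compose2[OF q_cont]) auto
  qed auto
  have int_A: "integrable M (\<lambda>z. indicator A z * Re (1 / z))"
  proof (rule integrableI_bounded_set[where A=A and B="1 / r"])
    show "AE z in M. z \<in> A \<longrightarrow> norm (indicator A z * Re (1 / z)) \<le> 1 / r"
    proof (intro AE_I2 impI)
      fix z assume z: "z \<in> A"
      have "\<bar>Re (1 / z)\<bar> \<le> 1 / cmod z"
        using abs_Re_le_cmod[of "1 / z"] by (simp add: norm_divide)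
      also have "\<dots> \<le> 1 / r"
        using z r by (intro divide_left_mono) (auto simp: A_def intro!: mult_pos_pos)
      finally show "norm (indicator A z * Re (1 / z)) \<le> 1 / r"
        using z by simp
    qed
  qed (use A_finite in simp_all)
  have int_B: "integrable M (\<lambda>z. indicator {r<..R} \<bar>Im z\<bar> * h \<bar>Im z\<bar>)"
  proof (rule integrableI_bounded_set[where A=B and B=K])
    show "AE z in M. z \<in> B \<longrightarrow> norm (indicator {r<..R} \<bar>Im z\<bar> * h \<bar>Im z\<bar>) \<le> K"
      using K by (auto simp: B_def)
  qed (use B_finite in \<open>auto simp: B_def\<close>)
  have int_L: "integrable M (\<lambda>z. indicator L z / r)"
    using finite[of r] by (simp add: L_def)
  have "l_rh M r R = (\<integral>z. indicator A z * Re (1 / z) \<partial>M)"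
    by (simp add: l_rh_def set_lebesgue_integral_def A_def)
  also have "\<dots> \<le> (\<integral>z. indicator L z / r + indicator {r<..R} \<bar>Im z\<bar> * h \<bar>Im z\<bar> \<partial>M)"
  proof (rule integral_mono_AE[OF int_A Bochner_Integration.integrable_add[OF int_L int_B]])
    show "AE z in M. indicator A z * Re (1 / z)
        \<le> indicator L z / r + indicator {r<..R} \<bar>Im z\<bar> * h \<bar>Im z\<bar>"
      using Re_le
    proof eventually_elim
      case (elim z)
      show ?case
        unfolding A_def L_def h_def using q_nonneg elim r by (rule indicator_Re_inverse_le)
    qed
  qed
  also have "\<dots> = measure M L / r + (\<integral>z. indicator {r<..R} \<bar>Im z\<bar> * h \<bar>Im z\<bar> \<partial>M)"
    using int_L int_B by simp
  also have "\<dots> = mu_i M r / r + stieltjes_Ioc M h r R"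
    using M_borel finite by (simp add: stieltjes_Ioc_eq_integral_Im mu_i_def L_def)
  finally show ?thesis
    by (simp add: h_def[abs_def])
qed

theorem lemma3:
  fixes r0 :: real and q :: "real \<Rightarrow> real" and M :: "complex measure" and C :: real
  assumes r0_pos: "r0 > 0"
    and q_cont: "continuous_on UNIV q"
    and q_nonneg: "\<And>y. q y \<ge> 0"
    and q_growth: "Limsup at_infinity (\<lambda>y. ereal (q y / \<bar>y\<bar>)) < 1"
    and M_borel: "sets M = sets borel"
    and M_supp: "emeasure M (UNIV - closure (Dq q)) = 0"
    and M_lin: "\<And>y. y \<ge> 0 \<Longrightarrow> emeasure M {z. \<bar>Im z\<bar> \<le> y} \<le> ennreal (C * y)"
  shows "\<exists>C0 \<ge> 0. \<forall>r R. r0 \<le> r \<and> r < R \<longrightarrow>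
           l_rh M r R \<le> stieltjes_Ioc M (\<lambda>y. (q y + q (- y)) / y\<^sup>2) r R + C0"
proof -
  have finite: "emeasure M {z. \<bar>Im z\<bar> \<le> y} < \<infinity>" for y
  proof (cases "y \<ge> 0")
    case True
    show ?thesis
      using M_lin[OF True] by (rule le_less_trans) simp
  next
    case False
    then have "{z. \<bar>Im z\<bar> \<le> y} = {}"
      by auto
    then show ?thesis
      by simp
  qed
  have Re_le: "AE z in M. Re z \<le> q (Im z)"
  proof (rule AE_I')
    show "UNIV - closure (Dq q) \<in> null_sets M"
      using M_supp M_borel by (auto simp: null_sets_def)
    show "{z \<in> space M. \<not> Re z \<le> q (Im z)} \<subseteq> UNIV - closure (Dq q)"
      using closure_Dq_subset[OF q_cont] by auto
  qed
  have mu_i_le: "mu_i M r \<le> max C 0 * r" if "r \<ge> 0" for r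
  proof -
    have "emeasure M {z. \<bar>Im z\<bar> \<le> r} \<le> ennreal (max C 0 * r)"
      using M_lin[OF that] by (rule order_trans) (use that in \<open>auto intro!: ennreal_leI mult_right_mono\<close>)
    then show ?thesis
      unfolding mu_i_def measure_def using that by (intro enn2real_leI) auto
  qed
  show ?thesis
  proof (intro exI[of _ "max C 0"] conjI allI impI)
    fix r R :: real
    assume "r0 \<le> r \<and> r < R"
    with r0_pos have r: "r > 0"
      by simp
    have "mu_i M r / r \<le> max C 0"
      using mu_i_le[of r] r by (simp add: divide_le_eq)
    with l_rh_le_mu_i_plus_stieltjes_Ioc[OF M_borel finite q_cont q_nonneg Re_le r, of R]
    show "l_rh M r R \<le> stieltjes_Ioc M (\<lambda>y. (q y + q (- y)) / y\<^sup>2) r R + max C 0"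
      by linarith
  qed simp
qed

end
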